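(* Let $v\in\tilde{\mathcal{X}}^1$. Then $\inf_{x\in\mathbb{R}}|v(x)|\le\frac{E(v)}{\sqrt2\,|p(v)|}$ (the right-hand side being $+\infty$ if $p(v)=0$). In particular, if $\delta(v)=1-\frac{E(v)}{\sqrt2|p(v)|}>0$, then for every $0<\delta<\delta(v)$ there exists $x_\delta\in\mathbb{R}$ with $1-|v(x_\delta)|\ge\delta$.
   Context: $\mathcal{X}^1=\{w\in L^\infty(\mathbb{R};\mathbb{C}):\ w'\in L^2,\ 1-|w|^2\in L^2\}$; $\tilde{\mathcal{X}}^1=\{v\in\mathcal{X}^1:\ |v(x)|>0\ \forall x\}$. $E(v)=\frac12\int|v'|^2+\frac14\int(1-|v|^2)^2$. For $v\in\tilde{\mathcal{X}}^1$ write $v=\varrho e^{i\varphi}$ with $\varrho=|v|$ and $\varphi$ a continuous real phase; $p(v)=\frac12\int_\mathbb{R}(\varrho^2-1)\varphi'$. *)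

theory Defs
  imports "HOL-Analysis.Analysis"
begin

text \<open>Weak (distributional) derivative on the real line, in its one-dimensional
  form: w is a measurable, locally integrable function whose integrals over
  compact intervals recover the increments of f (so f is locally absolutely
  continuous with f' = w a.e.).\<close>
definition is_weak_deriv :: "(real \<Rightarrow> 'a::euclidean_space) \<Rightarrow> (real \<Rightarrow> 'a) \<Rightarrow> bool" where
  "is_weak_deriv f w \<longleftrightarrow> w \<in> borel_measurable lborel \<and>
     (\<forall>a b. a \<le> b \<longrightarrow> (w has_integral (f b - f a)) {a..b})"

definition X1 :: "(real \<Rightarrow> complex) \<Rightarrow> bool" where
  "X1 v \<longleftrightarrow> bounded (range v)
     \<and> (\<exists>w. is_weak_deriv v w \<and> integrable lborel (\<lambda>x. (norm (w x))\<^sup>2))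
     \<and> integrable lborel (\<lambda>x. (1 - (norm (v x))\<^sup>2)\<^sup>2)"

definition X1_tilde :: "(real \<Rightarrow> complex) \<Rightarrow> bool" where
  "X1_tilde v \<longleftrightarrow> X1 v \<and> (\<forall>x. v x \<noteq> 0)"

text \<open>The derivative v' (unique a.e., so integrals below do not depend on the choice).\<close>
definition vderiv :: "(real \<Rightarrow> complex) \<Rightarrow> real \<Rightarrow> complex" where
  "vderiv v = (SOME w. is_weak_deriv v w \<and> integrable lborel (\<lambda>x. (norm (w x))\<^sup>2))"

definition energy :: "(real \<Rightarrow> complex) \<Rightarrow> real" where
  "energy v = (1/2) * (\<integral>x. (norm (vderiv v x))\<^sup>2 \<partial>lborel)
            + (1/4) * (\<integral>x. (1 - (norm (v x))\<^sup>2)\<^sup>2 \<partial>lborel)"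

text \<open>A continuous real phase of v (v = |v| e^{i phi}); unique up to a constant 2 pi k.\<close>
definition phase :: "(real \<Rightarrow> complex) \<Rightarrow> real \<Rightarrow> real" where
  "phase v = (SOME \<phi>. continuous_on UNIV \<phi> \<and> (\<forall>x. v x = complex_of_real (norm (v x)) * cis (\<phi> x)))"

definition momentum :: "(real \<Rightarrow> complex) \<Rightarrow> real" where
  "momentum v = (1/2) * (\<integral>x. ((norm (v x))\<^sup>2 - 1) * (SOME \<psi>. is_weak_deriv (phase v) \<psi>) x \<partial>lborel)"

end

theory Submission
  imports Defs
begin

text \<open>Write \<open>v = \<rho> e\<^sup>i\<^sup>\<phi>\<close> and \<open>m = inf \<rho>\<close>. Locally \<open>\<phi> y - \<phi> x = Im (Ln (v y / v x))\<close>, and from this the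
  continuous phase is locally absolutely continuous with \<open>\<phi>' = Im (v' / v)\<close>; as weak derivatives
  are unique a.e., every weak derivative of \<open>\<phi>\<close> satisfies \<open>\<rho> |\<phi>'| \<le> |v'|\<close> a.e. Pointwise then
  \<open>m |(\<rho>\<^sup>2 - 1) \<phi>'| \<le> |1 - \<rho>\<^sup>2| |v'| \<le> \<surd>2 (|v'|\<^sup>2/2 + (1 - \<rho>\<^sup>2)\<^sup>2/4)\<close> by AM-GM, and integrating
  over the line gives \<open>2 m |p(v)| \<le> \<surd>2 E(v)\<close>.\<close>

lemma is_weak_deriv_integral:
  assumes "is_weak_deriv f w" "x \<le> y"
  shows "integral {x..y} w = f y - f x"
  using assms unfolding is_weak_deriv_def by (simp add: integral_unique)

lemma is_weak_deriv_imp_continuous_on: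
  assumes "is_weak_deriv f w"
  shows "continuous_on UNIV f"
proof -
  have "isCont f x" for x
  proof -
    have "(w has_integral (f (x + 1) - f (x - 1))) {x - 1..x + 1}"
      using assms unfolding is_weak_deriv_def by simp
    then have "w integrable_on {x - 1..x + 1}" by (rule has_integral_integrable)
    then have "continuous_on {x - 1..x + 1} (\<lambda>t. f (x - 1) + integral {x - 1..t} w)"
      by (intro continuous_on_add continuous_on_const indefinite_integral_continuous_1)
    then have "continuous_on {x - 1..x + 1} f"
      by (rule continuous_on_eq) (simp add: is_weak_deriv_integral[OF assms])
    then show ?thesis
      by (rule continuous_on_interior) simp
  qed
  then show ?thesis by (simp add: continuous_at_imp_continuous_on)
qed

lemma AE_eq_0_on_interval_if_interval_integrals_eq_0:
  fixes f :: "real \<Rightarrow> 'a::euclidean_space"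
  assumes int: "\<And>a b. set_integrable lborel {a..b} f"
    and zero: "\<And>a b. (LINT x:{a..b}|lborel. f x) = 0"
  shows "AE x in lborel. x \<in> {c..d} \<longrightarrow> f x = 0"
proof -
  let ?I = "{c..d}"
  have "AE x in lborel. indicator ?I x *\<^sub>R f x = 0"
  proof (rule sigma_finite_measure.density_zero[OF sigma_finite_lborel])
    show "integrable lborel (\<lambda>x. indicator ?I x *\<^sub>R f x)"
      using int unfolding set_integrable_def .
    fix A :: "real set" assume "A \<in> sets lborel"
    then have "A \<in> sets borel" by simp
    then have "(LINT x:A \<inter> ?I|lborel. f x) = 0"
    proof (induction rule: borel_set_induct)
      case empty then show ?case by (simp add: set_lebesgue_integral_def)
    next
      case (interval a b)
      have "{a..b} \<inter> ?I = {max a c..min b d}" by auto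
      then show ?case using zero by simp
    next
      case (compl A)
      have "A \<inter> ?I \<union> - A \<inter> ?I = ?I" by blast
      moreover have "set_integrable lborel (B \<inter> ?I) f" if "B \<in> sets borel" for B
        using that by (intro set_integrable_subset[OF int]) auto
      ultimately have "(LINT x:?I|lborel. f x)
          = (LINT x:A \<inter> ?I|lborel. f x) + (LINT x:- A \<inter> ?I|lborel. f x)"
        using compl.hyps by (subst set_integral_Un[symmetric]) auto
      then show ?case using compl.IH zero by simp
    next
      case (union F)
      have "(LINT x:(\<Union>i. F i \<inter> ?I)|lborel. f x) = (\<Sum>i. LINT x:F i \<inter> ?I|lborel. f x)"
        by (rule lebesgue_integral_countable_add)
          (use union.hyps in \<open>auto intro: set_integrable_subset[OF int] simp: disjoint_family_on_def\<close>)
      then show ?case using union.IH by simp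
    qed
    then show "(LINT x:A|lborel. indicator ?I x *\<^sub>R f x) = 0"
      by (simp add: set_lebesgue_integral_def indicator_inter_arith mult.commute)
  qed
  then show ?thesis by eventually_elim (simp add: indicator_def)
qed

lemma AE_eq_0_if_interval_integrals_eq_0:
  fixes f :: "real \<Rightarrow> 'a::euclidean_space"
  assumes "\<And>a b. set_integrable lborel {a..b} f" "\<And>a b. (LINT x:{a..b}|lborel. f x) = 0"
  shows "AE x in lborel. f x = 0"
proof -
  have "AE x in lborel. \<forall>n::nat. x \<in> {- real n..real n} \<longrightarrow> f x = 0"
    using AE_eq_0_on_interval_if_interval_integrals_eq_0[OF assms]
    by (subst AE_all_countable) blast
  moreover have "\<exists>n::nat. x \<in> {- real n..real n}" for x :: real
    using real_arch_simple[of "\<bar>x\<bar>"] by (metis abs_le_iff atLeastAtMost_iff minus_le_iff)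
  ultimately show ?thesis by auto
qed

lemma set_integrable_lborel_if_absolutely_integrable_on:
  fixes f :: "real \<Rightarrow> 'a::euclidean_space"
  assumes "f \<in> borel_measurable borel" "S \<in> sets borel" "f absolutely_integrable_on S"
  shows "set_integrable lborel S f"
  using assms unfolding set_integrable_def by (simp add: integrable_completion)

text \<open>Weak derivatives are unique almost everywhere: their difference integrates to zero over
  every interval, so it has bounded (zero) variation and is absolutely integrable there.\<close>

lemma is_weak_deriv_unique_AE:
  fixes f :: "real \<Rightarrow> 'a::euclidean_space"
  assumes w1: "is_weak_deriv f w1" and w2: "is_weak_deriv f w2"
  shows "AE x in lborel. w1 x = w2 x"
proof -
  let ?h = "\<lambda>x. w1 x - w2 x"
  have zero: "(?h has_integral 0) {x..y}" if "x \<le> y" for x y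
    using has_integral_diff[of w1 "f y - f x" _ w2 "f y - f x"] w1 w2 that
    unfolding is_weak_deriv_def by simp
  have zero_integral: "integral {x..y} ?h = 0" for x y
    using zero[of x y] by (cases "x \<le> y") (simp_all add: integral_unique)
  have "w1 \<in> borel_measurable borel" "w2 \<in> borel_measurable borel"
    using w1 w2 unfolding is_weak_deriv_def by simp_all
  then have meas: "?h \<in> borel_measurable borel" by measurable
  have "?h absolutely_integrable_on {a..b}" for a b
  proof (cases "a \<le> b")
    case True
    show ?thesis
      unfolding cbox_interval[symmetric]
    proof (rule bounded_variation_absolutely_integrable_interval)
      show "?h integrable_on cbox a b" using zero[OF True] by (auto simp: cbox_interval)
      show "(\<Sum>K\<in>d. norm (integral K ?h)) \<le> 0" if d: "d division_of cbox a b" for d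
      proof -
        have "integral K ?h = 0" if "K \<in> d" for K
          using division_ofD(4)[OF d that] zero_integral by (auto simp: cbox_interval)
        then show ?thesis by simp
      qed
    qed
  qed (simp add: set_integrable_def)
  then have int: "set_integrable lborel {a..b} ?h" for a b
    using meas by (intro set_integrable_lborel_if_absolutely_integrable_on) auto
  have "(LINT x:{a..b}|lborel. ?h x) = 0" for a b
    using set_borel_integral_eq_integral(2)[OF int] zero_integral by simp
  then have "AE x in lborel. ?h x = 0"
    by (rule AE_eq_0_if_interval_integrals_eq_0[OF int])
  then show ?thesis by simp
qed

lemma interval_subadditive_le_additive_if_local:
  fixes S A :: "real \<Rightarrow> real \<Rightarrow> real"
  assumes sub: "\<And>x y. a \<le> x \<Longrightarrow> x \<le> y \<Longrightarrow> y \<le> b \<Longrightarrow> S x b \<le> S x y + S y b"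
    and add: "\<And>x y. a \<le> x \<Longrightarrow> x \<le> y \<Longrightarrow> y \<le> b \<Longrightarrow> A x b = A x y + A y b"
    and local: "\<And>x y. a \<le> x \<Longrightarrow> x \<le> y \<Longrightarrow> y \<le> b \<Longrightarrow> y - x \<le> d \<Longrightarrow> S x y \<le> A x y"
    and "d > 0" "a \<le> b"
  shows "S a b \<le> A a b"
proof -
  have "\<forall>x. a \<le> x \<longrightarrow> x \<le> b \<longrightarrow> b - x \<le> real n * d \<longrightarrow> S x b \<le> A x b" for n
  proof (induction n)
    case 0
    then show ?case using local \<open>d > 0\<close> by auto
  next
    case (Suc n)
    show ?case
    proof (intro allI impI)
      fix x assume x: "a \<le> x" "x \<le> b" "b - x \<le> real (Suc n) * d"
      show "S x b \<le> A x b"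
      proof (cases "b - x \<le> d")
        case True
        then show ?thesis using local x by simp
      next
        case False
        then have "S x (x + d) \<le> A x (x + d)" "S (x + d) b \<le> A (x + d) b"
          using local Suc.IH x \<open>d > 0\<close> by (auto simp: algebra_simps)
        then show ?thesis
          using sub[of x "x + d"] add[of x "x + d"] x False \<open>d > 0\<close> by simp
      qed
    qed
  qed
  moreover obtain n where "(b - a) / d \<le> real n"
    using real_arch_simple by blast
  ultimately show ?thesis
    using \<open>d > 0\<close> \<open>a \<le> b\<close> by (auto simp: divide_le_eq)
qed

lemma uniformly_continuous_on_interval:
  fixes f :: "real \<Rightarrow> 'a::metric_space"
  assumes "continuous_on UNIV f" "e > 0"
  obtains d where "d > 0" "\<And>x y. x \<in> {a..b} \<Longrightarrow> y \<in> {a..b} \<Longrightarrow> \<bar>y - x\<bar> \<le> d \<Longrightarrow> dist (f y) (f x) < e"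
proof -
  have "uniformly_continuous_on {a..b} f"
    using assms(1) by (intro compact_uniformly_continuous) (auto intro: continuous_on_subset)
  then obtain d where "d > 0" "\<And>x y. x \<in> {a..b} \<Longrightarrow> y \<in> {a..b} \<Longrightarrow> dist y x < d \<Longrightarrow> dist (f y) (f x) < e"
    unfolding uniformly_continuous_on_def using assms(2) by metis
  then show ?thesis
    by (intro that[of "d / 2"]) (auto simp: dist_real_def)
qed

lemma Ln_1_plus_approx:
  fixes u :: complex
  assumes "norm u \<le> 1/2"
  shows "norm (Ln (1 + u) - u) \<le> 2 * (norm u)\<^sup>2"
proof -
  have "norm (Ln (1 + u) - u) \<le> (norm u)\<^sup>2 / (1 - norm u)"
    using assms by (intro Ln_approx_linear) simp
  also have "\<dots> \<le> 2 * (norm u)\<^sup>2"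
  proof -
    have "(norm u)\<^sup>2 * 1 \<le> (norm u)\<^sup>2 * (2 * (1 - norm u))"
      using assms by (intro mult_left_mono) auto
    then show ?thesis using assms by (simp add: divide_le_eq algebra_simps)
  qed
  finally show ?thesis .
qed

lemma absolutely_integrable_on_continuous_mult:
  fixes c g :: "real \<Rightarrow> 'a::{euclidean_space,real_algebra}"
  assumes c: "continuous_on {a..b} c" and g: "g absolutely_integrable_on {a..b}"
  shows "(\<lambda>t. c t * g t) absolutely_integrable_on {a..b}"
proof (rule absolutely_integrable_bounded_measurable_product[OF bilinear_times])
  show "c \<in> borel_measurable (lebesgue_on {a..b})"
    by (rule continuous_imp_measurable_on_sets_lebesgue[OF c]) simp
  show "bounded (c ` {a..b})"
    by (rule compact_imp_bounded, rule compact_continuous_image[OF c]) simp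
qed (use g in auto)

lemma absolutely_integrable_on_interval_if_square_integrable:
  fixes w :: "real \<Rightarrow> 'a::euclidean_space"
  assumes meas: "w \<in> borel_measurable borel" and sq: "integrable lborel (\<lambda>x. (norm (w x))\<^sup>2)"
  shows "w absolutely_integrable_on {a..b}"
proof -
  have "integrable lborel (\<lambda>x. indicator {a..b} x *\<^sub>R w x)"
  proof (rule Bochner_Integration.integrable_bound)
    have "emeasure lborel {a..b} < \<infinity>"
      using emeasure_lborel_cbox_finite[of a b] by (simp add: cbox_interval)
    then show "integrable lborel (\<lambda>x. indicator {a..b} x + (norm (w x))\<^sup>2 :: real)"
      using sq by (intro Bochner_Integration.integrable_add integrable_real_indicator) simp_all
    have "norm (w x) \<le> 1 + (norm (w x))\<^sup>2" for x
      using zero_le_power2[of "norm (w x) - 1"] zero_le_power2[of "norm (w x)"]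
      unfolding power2_diff power_one mult_1_right by linarith
    then show "AE x in lborel. norm (indicator {a..b} x *\<^sub>R w x)
        \<le> norm (indicator {a..b} x + (norm (w x))\<^sup>2 :: real)"
      by (intro AE_I2) (auto simp: indicator_def)
  qed (use meas in measurable)
  then show ?thesis
    using meas unfolding set_integrable_def by (simp add: integrable_completion)
qed

lemma mult_le_sqrt2_energy_density:
  fixes a b :: real
  shows "a * b \<le> sqrt 2 * (a\<^sup>2 / 2 + b\<^sup>2 / 4)"
proof -
  have "0 \<le> sqrt 2 / 4 * (sqrt 2 * a - b)\<^sup>2" by simp
  also have "\<dots> = sqrt 2 * (a\<^sup>2 / 2 + b\<^sup>2 / 4) - a * b"
    by (simp add: power2_eq_square algebra_simps)
  finally show ?thesis by simp
qed

locale nonvanishing_polar =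
  fixes v w :: "real \<Rightarrow> complex" and \<phi> :: "real \<Rightarrow> real"
  assumes weak_deriv: "is_weak_deriv v w"
    and locally_integrable: "\<And>a b. w absolutely_integrable_on {a..b}"
    and nonzero: "\<And>x. v x \<noteq> 0"
    and continuous_phase: "continuous_on UNIV \<phi>"
    and polar: "\<And>x. v x = complex_of_real (norm (v x)) * cis (\<phi> x)"
begin

definition phase_deriv :: "real \<Rightarrow> real" where
  "phase_deriv t = Im (w t / v t)"

lemma continuous_on_v: "continuous_on UNIV v"
  using is_weak_deriv_imp_continuous_on[OF weak_deriv] .

lemma continuous_on_inverse_v: "continuous_on UNIV (\<lambda>t. inverse (v t))"
  using nonzero by (intro continuous_intros continuous_on_v) auto

lemma integrable_on_w: "w integrable_on {a..b}"
  using locally_integrable set_lebesgue_integral_eq_integral(1) by blast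

lemma integrable_on_norm_w: "(\<lambda>t. norm (w t)) integrable_on {a..b}"
  using locally_integrable absolutely_integrable_on_def by blast

lemma absolutely_integrable_on_quotient: "(\<lambda>t. w t / v t) absolutely_integrable_on {a..b}"
  using absolutely_integrable_on_continuous_mult[OF
      continuous_on_subset[OF continuous_on_inverse_v] locally_integrable]
  by (simp add: divide_inverse mult.commute)

lemma integrable_on_quotient: "(\<lambda>t. w t / v t) integrable_on {a..b}"
  using absolutely_integrable_on_quotient set_lebesgue_integral_eq_integral(1) by blast

lemma integrable_on_phase_deriv: "phase_deriv integrable_on {a..b}"
  using integrable_linear[OF integrable_on_quotient bounded_linear_Im]
  by (simp add: phase_deriv_def[abs_def] o_def)

lemma integral_phase_deriv: "integral {x..y} phase_deriv = Im (integral {x..y} (\<lambda>t. w t / v t))"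
  using integral_linear[OF integrable_on_quotient bounded_linear_Im]
  by (simp add: phase_deriv_def[abs_def] o_def)

lemma phase_deriv_measurable: "phase_deriv \<in> borel_measurable borel"
proof -
  have "w \<in> borel_measurable borel" using weak_deriv unfolding is_weak_deriv_def by simp
  moreover have "v \<in> borel_measurable borel"
    by (rule borel_measurable_continuous_onI[OF continuous_on_v])
  ultimately show ?thesis unfolding phase_deriv_def[abs_def] by measurable
qed

lemma norm_increment_le: "x \<le> y \<Longrightarrow> norm (v y - v x) \<le> integral {x..y} (\<lambda>t. norm (w t))"
  using integral_norm_bound_integral[OF integrable_on_w integrable_on_norm_w, of x y]
  by (simp add: is_weak_deriv_integral[OF weak_deriv])

lemma phase_increment_eq_Im_Ln:
  assumes "\<bar>\<phi> y - \<phi> x\<bar> < pi"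
  shows "\<phi> y - \<phi> x = Im (Ln (v y / v x))"
proof -
  let ?r = "norm (v y) / norm (v x)"
  have r: "?r > 0" using nonzero by simp
  have "v y / v x = complex_of_real ?r * cis (\<phi> y - \<phi> x)"
    using polar[of x] polar[of y] nonzero[of x] by (simp add: cis_divide[symmetric])
  also have "\<dots> = exp (complex_of_real (ln ?r) + \<i> * complex_of_real (\<phi> y - \<phi> x))"
    using r by (simp add: exp_add cis_conv_exp exp_of_real)
  finally show ?thesis using assms by simp
qed

lemma norm_bounded_below_on_interval:
  obtains \<mu> where "\<mu> > 0" "\<And>t. t \<in> {a..b} \<Longrightarrow> \<mu> \<le> norm (v t)"
proof (cases "a \<le> b")
  case True
  have "continuous_on {a..b} (\<lambda>t. norm (v t))"
    by (intro continuous_on_norm continuous_on_subset[OF continuous_on_v]) simp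
  then obtain t0 where "t0 \<in> {a..b}" "\<And>t. t \<in> {a..b} \<Longrightarrow> norm (v t0) \<le> norm (v t)"
    using continuous_attains_inf[of "{a..b}" "\<lambda>t. norm (v t)"] True by auto
  then show ?thesis using that[of "norm (v t0)"] nonzero[of t0] by simp
qed (use that[of 1] in auto)

text \<open>With \<open>u = (v y - v x) / v x\<close> the phase increment is \<open>Im (Ln (1 + u))\<close>; replace \<open>Ln (1 + u)\<close>
  by \<open>u = \<integral> v' / v x\<close>, and then \<open>v x\<close> by \<open>v t\<close> under the integral.\<close>

lemma phase_increment_approx:
  assumes xy: "x \<le> y" and phase: "\<bar>\<phi> y - \<phi> x\<bar> < pi"
    and small: "norm (v y - v x) \<le> norm (v x) / 2"
    and K: "\<And>t. t \<in> {x..y} \<Longrightarrow> norm (inverse (v x) - inverse (v t)) \<le> K"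
  shows "\<bar>(\<phi> y - \<phi> x) - integral {x..y} phase_deriv\<bar>
    \<le> 2 * (norm (v y - v x) / norm (v x))\<^sup>2 + K * integral {x..y} (\<lambda>t. norm (w t))"
proof -
  define u where "u = (v y - v x) / v x"
  have norm_u: "norm u = norm (v y - v x) / norm (v x)"
    unfolding u_def by (simp add: norm_divide)
  have "norm u \<le> 1/2"
    using small nonzero[of x] unfolding norm_u by (simp add: divide_le_eq)
  then have Ln_error: "\<bar>Im (Ln (1 + u)) - Im u\<bar> \<le> 2 * (norm u)\<^sup>2"
    using abs_Im_le_cmod[of "Ln (1 + u) - u"] Ln_1_plus_approx by fastforce
  have increment: "\<phi> y - \<phi> x = Im (Ln (1 + u))"
    using phase_increment_eq_Im_Ln[OF phase] nonzero[of x] by (simp add: u_def field_simps)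
  have deviation: "(\<lambda>t. (inverse (v x) - inverse (v t)) * w t)
      = (\<lambda>t. inverse (v x) * w t - w t / v t)"
    by (simp add: fun_eq_iff algebra_simps divide_inverse)
  have deviation_integrable: "(\<lambda>t. (inverse (v x) - inverse (v t)) * w t) integrable_on {x..y}"
    unfolding deviation
    by (intro integrable_diff integrable_on_mult_right integrable_on_w integrable_on_quotient)
  have "u = integral {x..y} (\<lambda>t. inverse (v x) * w t)"
    using is_weak_deriv_integral[OF weak_deriv xy] integrable_on_w
    by (simp add: u_def divide_inverse mult.commute)
  moreover have "integral {x..y} (\<lambda>t. (inverse (v x) - inverse (v t)) * w t)
      = integral {x..y} (\<lambda>t. inverse (v x) * w t) - integral {x..y} (\<lambda>t. w t / v t)"
    unfolding deviation
    by (intro integral_diff integrable_on_mult_right integrable_on_w integrable_on_quotient)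
  ultimately have "Im u - integral {x..y} phase_deriv
      = Im (integral {x..y} (\<lambda>t. (inverse (v x) - inverse (v t)) * w t))"
    by (simp add: integral_phase_deriv)
  moreover have "norm (integral {x..y} (\<lambda>t. (inverse (v x) - inverse (v t)) * w t))
      \<le> integral {x..y} (\<lambda>t. K * norm (w t))"
    using deviation_integrable integrable_on_mult_right[OF integrable_on_norm_w]
    by (rule integral_norm_bound_integral) (simp add: norm_mult mult_right_mono K)
  ultimately have "\<bar>Im u - integral {x..y} phase_deriv\<bar> \<le> K * integral {x..y} (\<lambda>t. norm (w t))"
    using abs_Im_le_cmod order_trans by fastforce
  then show ?thesis
    using increment Ln_error unfolding norm_u by simp
qed

lemma quadratic_increment_le:
  assumes xy: "x \<le> y" and \<mu>: "0 < \<mu>" "\<mu> \<le> norm (v x)" and "e \<ge> 0"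
    and increment: "norm (v y - v x) \<le> e * \<mu> / 4 * \<mu>"
  shows "2 * (norm (v y - v x) / norm (v x))\<^sup>2 \<le> e / 2 * integral {x..y} (\<lambda>t. norm (w t))"
proof -
  let ?N = "integral {x..y} (\<lambda>t. norm (w t))"
  let ?q = "norm (v y - v x) / norm (v x)"
  have "?q \<le> norm (v y - v x) / \<mu>"
    using \<mu> nonzero[of x] by (intro divide_left_mono) auto
  moreover have "norm (v y - v x) / \<mu> \<le> e * \<mu> / 4"
    using increment \<mu>(1) by (simp add: divide_le_eq)
  moreover have "norm (v y - v x) / \<mu> \<le> ?N / \<mu>"
    using norm_increment_le[OF xy] \<mu>(1) by (simp add: divide_right_mono)
  ultimately have "?q \<le> e * \<mu> / 4" "?q \<le> ?N / \<mu>" by linarith+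
  then have "?q * ?q \<le> (e * \<mu> / 4) * (?N / \<mu>)"
    using \<open>e \<ge> 0\<close> \<mu>(1) by (intro mult_mono) auto
  also have "\<dots> = e / 4 * ?N" using \<mu>(1) by simp
  finally show ?thesis unfolding power2_eq_square by linarith
qed

lemma phase_increment_local:
  assumes "e > 0"
  obtains d where "d > 0"
    "\<And>x y. a \<le> x \<Longrightarrow> x \<le> y \<Longrightarrow> y \<le> b \<Longrightarrow> y - x \<le> d \<Longrightarrow>
      \<bar>(\<phi> y - \<phi> x) - integral {x..y} phase_deriv\<bar> \<le> e * integral {x..y} (\<lambda>t. norm (w t))"
proof -
  obtain \<mu> where \<mu>: "\<mu> > 0" "\<And>t. t \<in> {a..b} \<Longrightarrow> \<mu> \<le> norm (v t)"
    using norm_bounded_below_on_interval[of a b] by blast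
  define \<epsilon> where "\<epsilon> = min (\<mu> / 2) (e * \<mu> / 4 * \<mu>)"
  have "\<epsilon> > 0" "e / 2 > 0" using \<mu> \<open>e > 0\<close> by (auto simp: \<epsilon>_def)
  obtain d1 where d1: "d1 > 0"
    "\<And>x y. x \<in> {a..b} \<Longrightarrow> y \<in> {a..b} \<Longrightarrow> \<bar>y - x\<bar> \<le> d1 \<Longrightarrow> dist (v y) (v x) < \<epsilon>"
    using uniformly_continuous_on_interval[where a = a and b = b, OF continuous_on_v \<open>\<epsilon> > 0\<close>] by blast
  obtain d2 where d2: "d2 > 0"
    "\<And>x y. x \<in> {a..b} \<Longrightarrow> y \<in> {a..b} \<Longrightarrow> \<bar>y - x\<bar> \<le> d2 \<Longrightarrow>
      dist (inverse (v y)) (inverse (v x)) < e / 2"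
    using uniformly_continuous_on_interval[where a = a and b = b, OF continuous_on_inverse_v \<open>e / 2 > 0\<close>] by blast
  obtain d3 where d3: "d3 > 0"
    "\<And>x y. x \<in> {a..b} \<Longrightarrow> y \<in> {a..b} \<Longrightarrow> \<bar>y - x\<bar> \<le> d3 \<Longrightarrow> dist (\<phi> y) (\<phi> x) < pi"
    using uniformly_continuous_on_interval[where a = a and b = b, OF continuous_phase pi_gt_zero] by blast
  show ?thesis
  proof (rule that[of "min d1 (min d2 d3)"])
    show "min d1 (min d2 d3) > 0" using d1 d2 d3 by simp
    fix x y assume xy: "a \<le> x" "x \<le> y" "y \<le> b" "y - x \<le> min d1 (min d2 d3)"
    let ?N = "integral {x..y} (\<lambda>t. norm (w t))"
    let ?q = "norm (v y - v x) / norm (v x)"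
    have close: "norm (v y - v x) \<le> \<epsilon>" "\<mu> \<le> norm (v x)"
      using d1(2)[of x y] \<mu>(2)[of x] xy by (auto simp: dist_norm)
    then have small: "norm (v y - v x) \<le> norm (v x) / 2"
      unfolding \<epsilon>_def by linarith
    have "2 * ?q\<^sup>2 \<le> e / 2 * ?N"
      using quadratic_increment_le[OF xy(2) \<mu>(1) close(2)] close(1) \<open>e > 0\<close>
      unfolding \<epsilon>_def by simp
    moreover have "\<bar>(\<phi> y - \<phi> x) - integral {x..y} phase_deriv\<bar> \<le> 2 * ?q\<^sup>2 + e / 2 * ?N"
    proof (rule phase_increment_approx[OF xy(2) _ small])
      show "\<bar>\<phi> y - \<phi> x\<bar> < pi" using d3(2)[of x y] xy by (simp add: dist_real_def)
      show "norm (inverse (v x) - inverse (v t)) \<le> e / 2" if "t \<in> {x..y}" for t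
        using d2(2)[of x t] xy that by (auto simp: dist_norm norm_minus_commute)
    qed
    ultimately show "\<bar>(\<phi> y - \<phi> x) - integral {x..y} phase_deriv\<bar> \<le> e * ?N" by linarith
  qed
qed

lemma phase_increment_integral:
  assumes "a \<le> b"
  shows "\<phi> b - \<phi> a = integral {a..b} phase_deriv"
proof -
  let ?S = "\<lambda>x y. \<bar>(\<phi> y - \<phi> x) - integral {x..y} phase_deriv\<bar>"
  let ?N = "\<lambda>x y. integral {x..y} (\<lambda>t. norm (w t))"
  have error: "?S a b \<le> e * ?N a b" if "e > 0" for e
  proof -
    obtain d where "d > 0" and local: "\<And>x y. a \<le> x \<Longrightarrow> x \<le> y \<Longrightarrow> y \<le> b \<Longrightarrow> y - x \<le> d \<Longrightarrow>
        ?S x y \<le> e * ?N x y"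
      using phase_increment_local[OF \<open>e > 0\<close>, of a b] by blast
    show ?thesis
    proof (rule interval_subadditive_le_additive_if_local[OF _ _ local \<open>d > 0\<close> assms])
      fix x y assume "a \<le> x" "x \<le> y" "y \<le> b"
      then show "?S x b \<le> ?S x y + ?S y b"
        using Henstock_Kurzweil_Integration.integral_combine[OF \<open>x \<le> y\<close> \<open>y \<le> b\<close>,
            OF integrable_on_phase_deriv]
        by simp
      show "e * ?N x b = e * ?N x y + e * ?N y b"
        using Henstock_Kurzweil_Integration.integral_combine[OF \<open>x \<le> y\<close> \<open>y \<le> b\<close>,
            OF integrable_on_norm_w]
        by (metis distrib_left)
    qed
  qed
  have "?N a b \<ge> 0" by (rule integral_nonneg[OF integrable_on_norm_w]) simp
  have "?S a b \<le> 0"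
  proof (rule field_le_epsilon)
    fix t :: real assume "t > 0"
    then have "?S a b \<le> t / (?N a b + 1) * ?N a b"
      using error[of "t / (?N a b + 1)"] \<open>?N a b \<ge> 0\<close> by simp
    also have "\<dots> \<le> t" using \<open>t > 0\<close> \<open>?N a b \<ge> 0\<close> by (simp add: field_simps)
    finally show "?S a b \<le> 0 + t" by simp
  qed
  then show ?thesis by simp
qed

lemma is_weak_deriv_phase: "is_weak_deriv \<phi> phase_deriv"
  unfolding is_weak_deriv_def
  using phase_deriv_measurable phase_increment_integral integrable_on_phase_deriv
  by (auto simp: has_integral_integral)

lemma abs_phase_deriv_le: "\<bar>phase_deriv t\<bar> \<le> norm (w t) / norm (v t)"
  unfolding phase_deriv_def using abs_Im_le_cmod[of "w t / v t"] by (simp add: norm_divide)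

lemma momentum_density_integral_le_energy:
  fixes \<psi> :: "real \<Rightarrow> real" and m :: real
  assumes \<psi>: "is_weak_deriv \<phi> \<psi>"
    and kinetic: "integrable lborel (\<lambda>t. (norm (w t))\<^sup>2)"
    and potential: "integrable lborel (\<lambda>t. (1 - (norm (v t))\<^sup>2)\<^sup>2)"
    and m: "0 \<le> m" "\<And>t. m \<le> norm (v t)"
  shows "m * \<bar>\<integral>t. ((norm (v t))\<^sup>2 - 1) * \<psi> t \<partial>lborel\<bar>
    \<le> sqrt 2 * (1/2 * (\<integral>t. (norm (w t))\<^sup>2 \<partial>lborel) + 1/4 * (\<integral>t. (1 - (norm (v t))\<^sup>2)\<^sup>2 \<partial>lborel))"
proof -
  let ?e = "\<lambda>t. sqrt 2 * ((norm (w t))\<^sup>2 / 2 + (1 - (norm (v t))\<^sup>2)\<^sup>2 / 4)"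
  \<comment> \<open>\<open>momentum\<close> uses an arbitrary weak derivative of the phase; a.e. it is \<open>Im (v' / v)\<close>.\<close>
  have "AE t in lborel. \<psi> t = phase_deriv t"
    by (rule is_weak_deriv_unique_AE[OF \<psi> is_weak_deriv_phase])
  then have "AE t in lborel. m * \<bar>((norm (v t))\<^sup>2 - 1) * \<psi> t\<bar> \<le> ?e t"
  proof eventually_elim
    fix t assume "\<psi> t = phase_deriv t"
    then have "m * \<bar>\<psi> t\<bar> \<le> norm (v t) * (norm (w t) / norm (v t))"
      using abs_phase_deriv_le[of t] m by (intro mult_mono) auto
    then have "m * \<bar>\<psi> t\<bar> \<le> norm (w t)"
      using nonzero[of t] by simp
    have "m * \<bar>((norm (v t))\<^sup>2 - 1) * \<psi> t\<bar> = \<bar>1 - (norm (v t))\<^sup>2\<bar> * (m * \<bar>\<psi> t\<bar>)"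
      using m(1) by (simp add: abs_mult abs_minus_commute)
    also have "\<dots> \<le> \<bar>1 - (norm (v t))\<^sup>2\<bar> * norm (w t)"
      using \<open>m * \<bar>\<psi> t\<bar> \<le> norm (w t)\<close> by (rule mult_left_mono) simp
    also have "\<dots> \<le> ?e t"
      using mult_le_sqrt2_energy_density[of "norm (w t)" "\<bar>1 - (norm (v t))\<^sup>2\<bar>"]
      by (simp add: mult.commute)
    finally show "m * \<bar>((norm (v t))\<^sup>2 - 1) * \<psi> t\<bar> \<le> ?e t" .
  qed
  then have "(\<integral>t. m * \<bar>((norm (v t))\<^sup>2 - 1) * \<psi> t\<bar> \<partial>lborel) \<le> (\<integral>t. ?e t \<partial>lborel)"
    using kinetic potential by (intro integral_mono_AE') auto
  moreover have "m * \<bar>\<integral>t. ((norm (v t))\<^sup>2 - 1) * \<psi> t \<partial>lborel\<bar>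
      \<le> (\<integral>t. m * \<bar>((norm (v t))\<^sup>2 - 1) * \<psi> t\<bar> \<partial>lborel)"
    using m(1) by (simp add: mult_left_mono)
  moreover have "(\<integral>t. ?e t \<partial>lborel)
      = sqrt 2 * (1/2 * (\<integral>t. (norm (w t))\<^sup>2 \<partial>lborel) + 1/4 * (\<integral>t. (1 - (norm (v t))\<^sup>2)\<^sup>2 \<partial>lborel))"
    using kinetic potential by simp
  ultimately show ?thesis by linarith
qed

end

lemma X1_vderiv:
  assumes "X1 v"
  shows "is_weak_deriv v (vderiv v)" "integrable lborel (\<lambda>x. (norm (vderiv v x))\<^sup>2)"
proof -
  have "\<exists>w. is_weak_deriv v w \<and> integrable lborel (\<lambda>x. (norm (w x))\<^sup>2)"
    using assms unfolding X1_def by blast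
  then have "is_weak_deriv v (vderiv v) \<and> integrable lborel (\<lambda>x. (norm (vderiv v x))\<^sup>2)"
    unfolding vderiv_def by (rule someI_ex)
  then show "is_weak_deriv v (vderiv v)" "integrable lborel (\<lambda>x. (norm (vderiv v x))\<^sup>2)"
    by blast+
qed

lemma phase_polar:
  assumes "continuous_on UNIV v" "\<And>x. v x \<noteq> 0"
  shows "continuous_on UNIV (phase v)" "\<And>x. v x = complex_of_real (norm (v x)) * cis (phase v x)"
proof -
  obtain L where L: "continuous_on UNIV L" "\<And>x. x \<in> UNIV \<Longrightarrow> v x = exp (L x)"
    using continuous_logarithm_on_contractible[OF assms(1) convex_imp_contractible[OF convex_UNIV]]
      assms(2) by blast
  have "\<exists>\<phi>. continuous_on UNIV \<phi> \<and> (\<forall>x. v x = complex_of_real (norm (v x)) * cis (\<phi> x))"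
  proof (intro exI conjI allI)
    show "continuous_on UNIV (\<lambda>x. Im (L x))" by (intro continuous_intros L(1))
    fix x
    have "v x = exp (L x)" using L(2) by simp
    moreover have "norm (v x) = exp (Re (L x))" using L(2) by simp
    ultimately show "v x = complex_of_real (norm (v x)) * cis (Im (L x))"
      by (simp add: exp_eq_polar)
  qed
  then have "continuous_on UNIV (phase v) \<and> (\<forall>x. v x = complex_of_real (norm (v x)) * cis (phase v x))"
    unfolding phase_def by (rule someI_ex)
  then show "continuous_on UNIV (phase v)" "\<And>x. v x = complex_of_real (norm (v x)) * cis (phase v x)"
    by blast+
qed

lemma X1_tilde_imp_nonvanishing_polar:
  assumes "X1_tilde v"
  shows "nonvanishing_polar v (vderiv v) (phase v)"
proof -
  have X1: "X1 v" and nonzero: "\<And>x. v x \<noteq> 0" using assms unfolding X1_tilde_def by auto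
  have w: "vderiv v \<in> borel_measurable borel"
    using X1_vderiv(1)[OF X1] unfolding is_weak_deriv_def by simp
  show ?thesis
    using X1_vderiv[OF X1] nonzero
      phase_polar[OF is_weak_deriv_imp_continuous_on[OF X1_vderiv(1)[OF X1]] nonzero]
      absolutely_integrable_on_interval_if_square_integrable[OF w X1_vderiv(2)[OF X1]]
    by unfold_locales auto
qed

lemma INF_norm_mult_momentum_le_energy:
  assumes "X1_tilde v"
  shows "(INF x. norm (v x)) * (sqrt 2 * \<bar>momentum v\<bar>) \<le> energy v"
proof -
  interpret nonvanishing_polar v "vderiv v" "phase v"
    using assms by (rule X1_tilde_imp_nonvanishing_polar)
  let ?m = "INF x. norm (v x)"
  let ?\<psi> = "SOME \<psi>. is_weak_deriv (phase v) \<psi>"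
  have \<psi>: "is_weak_deriv (phase v) ?\<psi>"
    by (rule someI[of _ phase_deriv]) (rule is_weak_deriv_phase)
  have bdd: "bdd_below (range (\<lambda>x. norm (v x)))"
    by (rule bdd_belowI[of _ 0]) auto
  have m: "0 \<le> ?m" "\<And>t. ?m \<le> norm (v t)"
    by (simp add: cINF_greatest) (rule cINF_lower[OF bdd], simp)
  have X1: "X1 v" using assms unfolding X1_tilde_def by simp
  then have potential: "integrable lborel (\<lambda>x. (1 - (norm (v x))\<^sup>2)\<^sup>2)"
    unfolding X1_def by simp
  have "?m * \<bar>2 * momentum v\<bar> \<le> sqrt 2 * energy v"
    using momentum_density_integral_le_energy[OF \<psi> X1_vderiv(2)[OF X1] potential m]
    by (simp only: momentum_def energy_def mult.assoc[symmetric] abs_mult)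
  moreover have "sqrt 2 * (?m * (sqrt 2 * \<bar>momentum v\<bar>)) = ?m * \<bar>2 * momentum v\<bar>"
    by (simp add: abs_mult mult.left_commute)
  ultimately have "sqrt 2 * (?m * (sqrt 2 * \<bar>momentum v\<bar>)) \<le> sqrt 2 * energy v"
    by linarith
  then show ?thesis by (rule mult_left_le_imp_le) simp
qed

theorem corollary3:
  fixes v :: "real \<Rightarrow> complex"
  assumes "X1_tilde v"
  shows "(momentum v \<noteq> 0 \<longrightarrow> (INF x. norm (v x)) \<le> energy v / (sqrt 2 * \<bar>momentum v\<bar>))
     \<and> (momentum v \<noteq> 0 \<and> 1 - energy v / (sqrt 2 * \<bar>momentum v\<bar>) > 0 \<longrightarrow>
         (\<forall>\<delta>. 0 < \<delta> \<and> \<delta> < 1 - energy v / (sqrt 2 * \<bar>momentum v\<bar>) \<longrightarrow>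
               (\<exists>x. 1 - norm (v x) \<ge> \<delta>)))"
proof -
  let ?R = "energy v / (sqrt 2 * \<bar>momentum v\<bar>)"
  have bound: "(INF x. norm (v x)) \<le> ?R" if "momentum v \<noteq> 0"
    using INF_norm_mult_momentum_le_energy[OF assms] that by (simp add: pos_le_divide_eq)
  have bdd: "bdd_below (range (\<lambda>x. norm (v x)))"
    by (rule bdd_belowI[of _ 0]) auto
  show ?thesis
  proof (intro conjI impI allI)
    assume "momentum v \<noteq> 0"
    then show "(INF x. norm (v x)) \<le> ?R" by (rule bound)
  next
    fix \<delta> assume "momentum v \<noteq> 0 \<and> 1 - ?R > 0" "0 < \<delta> \<and> \<delta> < 1 - ?R"
    then have "(INF x. norm (v x)) < 1 - \<delta>" using bound by force
    then obtain x where "norm (v x) < 1 - \<delta>"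
      using cINF_less_iff[OF UNIV_not_empty bdd] by blast
    then show "\<exists>x. 1 - norm (v x) \<ge> \<delta>" by (intro exI[of _ x]) simp
  qed
qed

end
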